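(* Consider the protocol $P_{RL}$ with parameter $N$ on a directed ring of size $n$ with $2\le n\le N$, under the uniformly random scheduler. Let $C$ be a configuration in which no agent is a leader. Then the expected number of steps until the execution from $C$ reaches a configuration containing a leader is $O(nN)$ (with a constant independent of $n$, $N$ and $C$).
   Context: Model. A population is a directed ring of $n\ge 2$ anonymous agents $u_0,\dots,u_{n-1}$ (indices modulo $n$) with arcs $e_i=(u_i,u_{i+1})$. A configuration assigns a state to each agent. In an interaction on arc $e_i$, initiator $u_i$ and responder $u_{i+1}$ update their states by the transition function and all other agents keep their states. The uniformly random scheduler chooses at each step $t=0,1,2,\dots$ an arc uniformly at random among the $n$ arcs, independently; the execution from $C_0$ is the resulting sequence of configurations $C_0,C_1,\dots$. Protocol $P_{RL}$ (parameter $N$). Each agent has variables $\mathit{leader}\in\{0,1\}$, $\mathit{bullet}\in\{0,1,2\}$, $\mathit{shield}\in\{0,1\}$, $\mathit{signal}\in\{0,1\}$, $\mathit{dist}\in\{0,\dots,N\}$; it is a leader if $\mathit{leader}=1$. In an interaction with initiator $l$ and responder $r$ the following are executed in order: 1. If $l.\mathit{leader}=1$ then $l.\mathit{dist}\gets 0$. 2. If $r.\mathit{leader}=1$ then $r.\mathit{dist}\gets 0$; else if $r.\mathit{bullet}=0$ then $r.\mathit{dist}\gets\min(l.\mathit{dist}+1,N)$. 3. If $r.\mathit{dist}=N$ then $r.\mathit{leader}\gets1$, $r.\mathit{bullet}\gets2$, $r.\mathit{shield}\gets1$, $r.\mathit{signal}\gets0$, $r.\mathit{dist}\gets0$. 4.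 If $l.\mathit{leader}=1$ and $l.\mathit{signal}=1$ then $l.\mathit{bullet}\gets2$, $l.\mathit{shield}\gets1$, $l.\mathit{signal}\gets0$. 5. If $r.\mathit{leader}=1$ and $r.\mathit{signal}=1$ then $r.\mathit{bullet}\gets1$, $r.\mathit{shield}\gets0$, $r.\mathit{signal}\gets0$. 6. If $l.\mathit{bullet}>0$ and $r.\mathit{leader}=1$: set $r.\mathit{leader}\gets0$ if ($l.\mathit{bullet}=2$ and $r.\mathit{shield}=0$); then $l.\mathit{bullet}\gets0$. Else, if $l.\mathit{bullet}>0$ and $r.\mathit{leader}=0$: if $r.\mathit{bullet}=0$ then $r.\mathit{bullet}\gets l.\mathit{bullet}$; then $l.\mathit{bullet}\gets0$ and $r.\mathit{signal}\gets0$. 7. $l.\mathit{signal}\gets\max(l.\mathit{signal},r.\mathit{signal},r.\mathit{leader})$. *)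

theory Defs
  imports "HOL-Probability.Probability"
begin

text \<open>Agent state of protocol P_RL. Boolean fields encode the 0/1 variables
  (True = 1); bullet ranges over {0,1,2}, dist over {0..N}.\<close>
record agent_state =
  leader :: bool
  bullet :: nat
  shield :: bool
  signal :: bool
  dist   :: nat

definition valid_state :: "nat \<Rightarrow> agent_state \<Rightarrow> bool" where
  "valid_state N s \<longleftrightarrow> bullet s \<le> 2 \<and> dist s \<le> N"

definition delta :: "nat \<Rightarrow> agent_state \<Rightarrow> agent_state \<Rightarrow> agent_state \<times> agent_state" where
  "delta N l0 r0 = (
     let
       \<comment> \<open>1\<close>
       l1 = (if leader l0 then l0\<lparr>dist := 0\<rparr> else l0);
       \<comment> \<open>2\<close>
       r2 = (if leader r0 then r0\<lparr>dist := 0\<rparr>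
             else if bullet r0 = 0 then r0\<lparr>dist := min (dist l1 + 1) N\<rparr> else r0);
       \<comment> \<open>3\<close>
       r3 = (if dist r2 = N then r2\<lparr>leader := True, bullet := 2, shield := True,
                                   signal := False, dist := 0\<rparr> else r2);
       \<comment> \<open>4\<close>
       l4 = (if leader l1 \<and> signal l1 then l1\<lparr>bullet := 2, shield := True, signal := False\<rparr>
             else l1);
       \<comment> \<open>5\<close>
       r5 = (if leader r3 \<and> signal r3 then r3\<lparr>bullet := 1, shield := False, signal := False\<rparr>
             else r3);
       \<comment> \<open>6\<close>
       (l6, r6) =
         (if bullet l4 > 0 \<and> leader r5 then
            (l4\<lparr>bullet := 0\<rparr>,
             (if bullet l4 = 2 \<and> \<not> shield r5 then r5\<lparr>leader := False\<rparr> else r5))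
          else if bullet l4 > 0 \<and> \<not> leader r5 then
            (l4\<lparr>bullet := 0\<rparr>,
             (if bullet r5 = 0 then r5\<lparr>bullet := bullet l4\<rparr> else r5)\<lparr>signal := False\<rparr>)
          else (l4, r5));
       \<comment> \<open>7\<close>
       l7 = l6\<lparr>signal := (signal l6 \<or> signal r6 \<or> leader r6)\<rparr>
     in (l7, r6))"

text \<open>Configurations of a ring of size n: agents u_0..u_{n-1} are C 0 .. C (n-1).
  An interaction on arc e_i = (u_i, u_{i+1 mod n}).\<close>
type_synonym config = "nat \<Rightarrow> agent_state"

definition interact :: "nat \<Rightarrow> nat \<Rightarrow> config \<Rightarrow> nat \<Rightarrow> config" where
  "interact N n C i =
     (let (l', r') = delta N (C i) (C (Suc i mod n))
      in C(i := l', Suc i mod n := r'))"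

primrec exec :: "nat \<Rightarrow> nat \<Rightarrow> config \<Rightarrow> nat stream \<Rightarrow> nat \<Rightarrow> config" where
  "exec N n C \<omega> 0 = C"
| "exec N n C \<omega> (Suc t) = interact N n (exec N n C \<omega> t) (\<omega> !! t)"

definition has_leader :: "nat \<Rightarrow> config \<Rightarrow> bool" where
  "has_leader n C \<longleftrightarrow> (\<exists>i<n. leader (C i))"

definition scheduler :: "nat \<Rightarrow> nat stream measure" where
  "scheduler n = stream_space (measure_pmf (pmf_of_set {..<n}))"

definition hit_time :: "nat \<Rightarrow> nat \<Rightarrow> config \<Rightarrow> nat stream \<Rightarrow> enat" where
  "hit_time N n C \<omega> =
     (if \<exists>t. has_leader n (exec N n C \<omega> t)
      then enat (LEAST t. has_leader n (exec N n C \<omega> t)) else \<infinity>)"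

definition expected_hit_time :: "nat \<Rightarrow> nat \<Rightarrow> config \<Rightarrow> ennreal" where
  "expected_hit_time N n C = (\<integral>\<^sup>+ \<omega>. ennreal_of_enat (hit_time N n C \<omega>) \<partial>scheduler n)"

end

theory Submission
  imports Defs
begin

text \<open>If a chain driven by i.i.d. random choices admits a nonnegative potential that drops by
  at least 1 in expectation at every step outside the target set, its expected hitting time of
  the target is at most the initial potential. For P_RL started without a leader such a potential
  exists: before any bullet is fired it is the total distance deficit, afterwards it is
  2n (1 + ln W) for the total bullet weight W \<le> n 2^N, so it never exceeds 6nN when n \<le> N.\<close>

lemma SUP_min_enat: "(SUP k. min (enat k) x) = x"
proof -
  have "(SUP k. enat k) = \<infinity>"
    by (simp add: Sup_enat_def finite_image_iff inj_on_def)
  then show ?thesis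
    using SUP_inf[of enat UNIV x] by (simp add: inf_min)
qed

lemma min_enat_Suc_eSuc: "min (enat (Suc k)) (eSuc x) = eSuc (min (enat k) x)"
  by (cases x) (auto simp: eSuc_enat)

lemma sum_fun_upd2:
  fixes g :: "'b \<Rightarrow> 'c::ab_group_add"
  assumes "finite A" "i \<in> A" "j \<in> A" "i \<noteq> j"
  shows "(\<Sum>k\<in>A. g ((C(i := a, j := b)) k)) = (\<Sum>k\<in>A. g (C k)) - g (C i) - g (C j) + g a + g b"
proof -
  have "(\<Sum>k\<in>A. g ((C(i := a, j := b)) k)) =
      (\<Sum>k\<in>A. g (C k) + ((if k = i then g a - g (C i) else 0) + (if k = j then g b - g (C j) else 0)))"
    using assms by (intro sum.cong) auto
  also have "\<dots> = (\<Sum>k\<in>A. g (C k)) - g (C i) - g (C j) + g a + g b"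
    using assms by (simp add: sum.distrib sum.delta' algebra_simps)
  finally show ?thesis .
qed

lemma sum_Suc_mod:
  assumes "0 < n"
  shows "(\<Sum>i<n. f (Suc i mod n)) = (\<Sum>i<n. f i)"
proof -
  obtain m where m: "n = Suc m"
    using assms by (cases n) auto
  have "(\<Sum>i<Suc m. f (Suc i mod Suc m)) = (\<Sum>i<m. f (Suc i)) + f 0"
    by (simp add: sum.lessThan_Suc)
  also have "\<dots> = (\<Sum>i<Suc m. f i)"
    by (subst sum.lessThan_Suc_shift) (simp add: add.commute)
  finally show ?thesis
    using m by simp
qed

lemma Suc_mod_neq:
  assumes "2 \<le> n"
  shows "Suc i mod n \<noteq> i"
proof (cases "Suc i < n")
  case False
  show ?thesis
  proof (cases "Suc i = n")
    case True
    then show ?thesis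
      using assms by auto
  next
    case False
    then have "n \<le> i"
      using \<open>\<not> Suc i < n\<close> by simp
    moreover have "Suc i mod n < n"
      using assms by simp
    ultimately show ?thesis
      by simp
  qed
qed simp

lemma ln_le_ln_minus_div:
  fixes x y d :: real
  assumes "0 < x" "0 < y" "y \<le> x - d"
  shows "ln y \<le> ln x - d / x"
proof -
  have "ln y - ln x = ln (y / x)"
    using assms by (simp add: ln_div)
  also have "\<dots> \<le> y / x - 1"
    using assms by (intro ln_le_minus_one) simp
  also have "\<dots> \<le> (x - d) / x - 1"
    using assms by (simp add: divide_right_mono)
  also have "\<dots> = - (d / x)"
    using assms by (simp add: field_simps)
  finally show ?thesis
    by simp
qed

primrec trajectory :: "('c \<Rightarrow> 'a \<Rightarrow> 'c) \<Rightarrow> 'c \<Rightarrow> 'a stream \<Rightarrow> nat \<Rightarrow> 'c" where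
  "trajectory f c \<omega> 0 = c"
| "trajectory f c \<omega> (Suc t) = trajectory f (f c (shd \<omega>)) (stl \<omega>) t"

definition hitting_time :: "('c \<Rightarrow> 'a \<Rightarrow> 'c) \<Rightarrow> ('c \<Rightarrow> bool) \<Rightarrow> 'c \<Rightarrow> 'a stream \<Rightarrow> enat" where
  "hitting_time f P c \<omega> =
     (if \<exists>t. P (trajectory f c \<omega> t) then enat (LEAST t. P (trajectory f c \<omega> t)) else \<infinity>)"

lemma trajectory_Suc: "trajectory f c \<omega> (Suc t) = f (trajectory f c \<omega> t) (\<omega> !! t)"
  by (induction t arbitrary: c \<omega>) auto

lemma hitting_time_0: "P c \<Longrightarrow> hitting_time f P c \<omega> = 0"
  by (simp add: hitting_time_def zero_enat_def exI[of _ 0])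

lemma hitting_time_Cons:
  "hitting_time f P c (x ## \<omega>) = (if P c then 0 else eSuc (hitting_time f P (f c x) \<omega>))"
proof (cases "P c")
  case True
  then show ?thesis
    by (simp add: hitting_time_0)
next
  case False
  then have shift: "P (trajectory f c (x ## \<omega>) t) \<longleftrightarrow> (\<exists>s. t = Suc s \<and> P (trajectory f (f c x) \<omega> s))" for t
    by (cases t) auto
  show ?thesis
  proof (cases "\<exists>s. P (trajectory f (f c x) \<omega> s)")
    case True
    then obtain s where "P (trajectory f (f c x) \<omega> s)" ..
    then have "(LEAST t. P (trajectory f c (x ## \<omega>) t)) = Suc (LEAST s. P (trajectory f (f c x) \<omega> s))"
      using \<open>\<not> P c\<close> by (intro Least_Suc2) (auto simp: shift)
    with True False show ?thesis
      by (auto simp: hitting_time_def shift eSuc_enat)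
  next
    case False
    with \<open>\<not> P c\<close> show ?thesis
      by (auto simp: hitting_time_def shift)
  qed
qed

lemma truncated_hitting_time_Cons:
  "min (enat (Suc k)) (hitting_time f P c (x ## \<omega>)) =
     (if P c then 0 else eSuc (min (enat k) (hitting_time f P (f c x) \<omega>)))"
  by (simp add: hitting_time_Cons min_enat_Suc_eSuc)

lemma measurable_truncated_hitting_time:
  fixes f :: "'c \<Rightarrow> 'a::countable \<Rightarrow> 'c"
  shows "(\<lambda>\<omega>. ennreal_of_enat (min (enat k) (hitting_time f P c \<omega>)))
           \<in> borel_measurable (stream_space (measure_pmf p))"
proof (induction k arbitrary: c)
  case 0
  then show ?case by (simp add: zero_enat_def[symmetric])
next
  case (Suc k)
  have unfold: "min (enat (Suc k)) (hitting_time f P c \<omega>) =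
      (if P c then 0 else eSuc (min (enat k) (hitting_time f P (f c (shd \<omega>)) (stl \<omega>))))" for \<omega>
    using truncated_hitting_time_Cons[of k f P c "shd \<omega>" "stl \<omega>"] by simp
  show ?case
  proof (cases "P c")
    case False
    have "(\<lambda>\<omega>. (\<lambda>x \<omega>. 1 + ennreal_of_enat (min (enat k) (hitting_time f P (f c x) (stl \<omega>)))) (shd \<omega>) \<omega>)
            \<in> borel_measurable (stream_space (measure_pmf p))"
      by (rule measurable_compose_countable) (use Suc in measurable)
    with False show ?thesis
      by (simp add: unfold)
  qed (simp add: unfold)
qed

lemma nn_integral_hitting_time_le_potential:
  fixes f :: "'c \<Rightarrow> 'a::countable \<Rightarrow> 'c" and V :: "'c \<Rightarrow> ennreal"
  assumes invariant: "\<And>c x. I c \<Longrightarrow> x \<in> set_pmf p \<Longrightarrow> I (f c x)"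
    and drift: "\<And>c. I c \<Longrightarrow> \<not> P c \<Longrightarrow> 1 + (\<integral>\<^sup>+x. V (f c x) \<partial>p) \<le> V c"
    and "I c"
  shows "(\<integral>\<^sup>+\<omega>. ennreal_of_enat (hitting_time f P c \<omega>) \<partial>stream_space (measure_pmf p)) \<le> V c"
proof -
  let ?S = "stream_space (measure_pmf p)"
  let ?T = "\<lambda>k c \<omega>. ennreal_of_enat (min (enat k) (hitting_time f P c \<omega>))"
  interpret S: prob_space ?S
    by (rule prob_space.prob_space_stream_space[OF prob_space_measure_pmf])
  have truncated: "(\<integral>\<^sup>+\<omega>. ?T k c \<omega> \<partial>?S) \<le> V c" if "I c" for k c
    using that
  proof (induction k arbitrary: c)
    case 0
    then show ?case by (simp add: zero_enat_def[symmetric])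
  next
    case (Suc k)
    show ?case
    proof (cases "P c")
      case True
      then show ?thesis by (simp add: hitting_time_0)
    next
      case False
      have "(\<integral>\<^sup>+\<omega>. ?T (Suc k) c \<omega> \<partial>?S) = (\<integral>\<^sup>+x. (\<integral>\<^sup>+\<omega>. ?T (Suc k) c (x ## \<omega>) \<partial>?S) \<partial>p)"
        by (rule prob_space.nn_integral_stream_space[OF prob_space_measure_pmf
              measurable_truncated_hitting_time])
      also have "\<dots> = (\<integral>\<^sup>+x. 1 + (\<integral>\<^sup>+\<omega>. ?T k (f c x) \<omega> \<partial>?S) \<partial>p)"
        using False
        by (simp add: truncated_hitting_time_Cons nn_integral_add measurable_truncated_hitting_time
            S.emeasure_space_1)
      also have "\<dots> = 1 + (\<integral>\<^sup>+x. (\<integral>\<^sup>+\<omega>. ?T k (f c x) \<omega> \<partial>?S) \<partial>p)"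
        by (simp add: nn_integral_add measure_pmf.emeasure_space_1)
      also have "\<dots> \<le> 1 + (\<integral>\<^sup>+x. V (f c x) \<partial>p)"
        using Suc invariant
        by (intro add_left_mono nn_integral_mono_AE) (auto simp: AE_measure_pmf_iff)
      also have "\<dots> \<le> V c"
        using drift Suc.prems False .
      finally show ?thesis .
    qed
  qed
  have "ennreal_of_enat (hitting_time f P c \<omega>) = (SUP k. ?T k c \<omega>)" for \<omega>
    using ennreal_of_enat_Sup[of "range (\<lambda>k. min (enat k) (hitting_time f P c \<omega>))"]
    by (simp add: image_image SUP_min_enat)
  then have "(\<integral>\<^sup>+\<omega>. ennreal_of_enat (hitting_time f P c \<omega>) \<partial>?S) = (SUP k. \<integral>\<^sup>+\<omega>. ?T k c \<omega> \<partial>?S)"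
    by (simp add: nn_integral_monotone_convergence_SUP incseq_SucI le_funI
        measurable_truncated_hitting_time min.coboundedI1 min.coboundedI2)
  also have "\<dots> \<le> V c"
    using truncated \<open>I c\<close> by (intro SUP_least)
  finally show ?thesis .
qed

lemma exec_eq_trajectory: "exec N n C \<omega> t = trajectory (interact N n) C \<omega> t"
  by (induction t) (simp_all del: trajectory.simps(2) add: trajectory_Suc)

lemma hit_time_eq_hitting_time: "hit_time N n C = hitting_time (interact N n) (has_leader n) C"
  by (simp add: fun_eq_iff hit_time_def hitting_time_def exec_eq_trajectory)

text \<open>The responder's dist after step 2 of an interaction between two non-leaders.\<close>
definition relay_dist :: "nat \<Rightarrow> agent_state \<Rightarrow> agent_state \<Rightarrow> nat" where
  "relay_dist N l r = (if bullet r = 0 then min (Suc (dist l)) N else dist r)"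

lemma delta_elects_leader:
  "\<not> leader l \<Longrightarrow> \<not> leader r \<Longrightarrow> relay_dist N l r = N \<Longrightarrow> leader (snd (delta N l r))"
  unfolding delta_def relay_dist_def Let_def by (auto split: if_splits prod.splits)

lemma delta_without_election:
  assumes "\<not> leader l" "\<not> leader r" "relay_dist N l r \<noteq> N"
  shows "\<not> leader (fst (delta N l r))" "\<not> leader (snd (delta N l r))"
    and "dist (fst (delta N l r)) = dist l" "dist (snd (delta N l r)) = relay_dist N l r"
    and "bullet (fst (delta N l r)) = 0"
    and "bullet (snd (delta N l r)) = (if bullet r = 0 then bullet l else bullet r)"
  using assms unfolding delta_def relay_dist_def Let_def by (auto split: if_splits prod.splits)

lemma valid_state_delta:
  assumes "valid_state N l" "valid_state N r"
  shows "valid_state N (fst (delta N l r))" "valid_state N (snd (delta N l r))"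
  using assms unfolding valid_state_def delta_def Let_def by (auto split: if_splits prod.splits)

lemma interact_eq:
  "interact N n C i = C(i := fst (delta N (C i) (C (Suc i mod n))),
                        Suc i mod n := snd (delta N (C i) (C (Suc i mod n))))"
  by (simp add: interact_def split: prod.split)

lemma valid_state_interact:
  assumes "\<forall>k<n. valid_state N (C k)" "i < n" "k < n"
  shows "valid_state N (interact N n C i k)"
  using assms valid_state_delta[of N "C i" "C (Suc i mod n)"] by (simp add: interact_eq)

lemma interact_elects_leader:
  assumes "i < n" "\<not> has_leader n C" "relay_dist N (C i) (C (Suc i mod n)) = N"
  shows "has_leader n (interact N n C i)"
proof -
  have j: "Suc i mod n < n"
    using assms(1) by simp
  then have "\<not> leader (C i)" "\<not> leader (C (Suc i mod n))"
    using assms(1,2) by (auto simp: has_leader_def)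
  then have "leader (interact N n C i (Suc i mod n))"
    using delta_elects_leader assms(3) by (simp add: interact_eq)
  then show ?thesis
    using j unfolding has_leader_def by blast
qed

lemma interact_without_election:
  assumes n: "2 \<le> n" and i: "i < n" and leaderless: "\<not> has_leader n C"
    and no_election: "relay_dist N (C i) (C (Suc i mod n)) \<noteq> N"
  shows "\<not> has_leader n (interact N n C i)"
proof -
  have "Suc i mod n < n" "Suc i mod n \<noteq> i"
    using i Suc_mod_neq[OF n] by auto
  then show ?thesis
    using leaderless i delta_without_election(1,2)[OF _ _ no_election]
    by (auto simp: has_leader_def interact_eq)
qed

text \<open>Without leaders no bullet is created, and a bullet fired into a bullet merges with it,
  so at least one bullet survives.\<close>
lemma interact_keeps_a_bullet:
  assumes n: "2 \<le> n" and i: "i < n" and leaderless: "\<not> has_leader n C"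
    and no_election: "relay_dist N (C i) (C (Suc i mod n)) \<noteq> N"
    and bullet: "k < n" "0 < bullet (C k)"
  shows "\<exists>k'<n. 0 < bullet (interact N n C i k')"
proof -
  define j where "j = Suc i mod n"
  have j: "j < n" "j \<noteq> i"
    using i Suc_mod_neq[OF n] by (auto simp: j_def)
  have followers: "\<not> leader (C i)" "\<not> leader (C j)"
    using leaderless i j by (auto simp: has_leader_def)
  note after = delta_without_election[OF followers no_election[folded j_def]]
  show ?thesis
  proof (cases "k = i \<or> k = j")
    case True
    then have "0 < bullet (interact N n C i j)"
      using bullet after j by (auto simp: interact_eq j_def)
    then show ?thesis
      using j by blast
  next
    case False
    then show ?thesis
      using bullet by (auto simp: interact_eq j_def)
  qed
qed

definition bullet_weight :: "nat \<Rightarrow> agent_state \<Rightarrow> real" where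
  "bullet_weight N s = (if 0 < bullet s then 2 ^ (N - dist s) else 0)"

text \<open>Before any bullet exists, arc i replaces the dist of u_{i+1} by that of u_i plus one, so the
  total deficit drops by 1 on average over the n arcs. Once bullets exist, their dist is frozen
  and a fired bullet keeps at most half of its weight, so the total weight W drops in expectation
  by at least W/(2n), and 2n (1 + ln W) by at least 1.\<close>
definition potential :: "nat \<Rightarrow> nat \<Rightarrow> config \<Rightarrow> real" where
  "potential N n C =
     (if has_leader n C then 0
      else if \<forall>j<n. bullet (C j) = 0 then (\<Sum>j<n. real N + 1 - real (dist (C j)))
      else 2 * real n * (1 + ln (\<Sum>j<n. bullet_weight N (C j))))"

lemma bullet_weight_nonneg: "0 \<le> bullet_weight N s"
  by (simp add: bullet_weight_def)

lemma one_le_total_bullet_weight: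
  fixes C :: config
  assumes "k < n" "0 < bullet (C k)"
  shows "1 \<le> (\<Sum>j<n. bullet_weight N (C j))"
proof -
  have "1 \<le> bullet_weight N (C k)"
    using assms by (simp add: bullet_weight_def)
  also have "\<dots> \<le> (\<Sum>j<n. bullet_weight N (C j))"
    by (rule member_le_sum) (use assms in \<open>auto simp: bullet_weight_nonneg\<close>)
  finally show ?thesis .
qed

lemma potential_nonneg:
  assumes "\<forall>j<n. valid_state N (C j)"
  shows "0 \<le> potential N n C"
proof (cases "has_leader n C \<or> (\<forall>j<n. bullet (C j) = 0)")
  case True
  then show ?thesis
    using assms by (auto simp: potential_def valid_state_def intro!: sum_nonneg)
next
  case False
  then obtain k where "k < n" "0 < bullet (C k)"
    by auto
  then have "1 \<le> (\<Sum>j<n. bullet_weight N (C j))"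
    by (rule one_le_total_bullet_weight)
  with False show ?thesis
    by (auto simp: potential_def)
qed

lemma potential_le:
  assumes n: "2 \<le> n" and nN: "n \<le> N"
  shows "potential N n C \<le> 6 * real n * real N"
proof -
  have N: "1 \<le> real N"
    using n nN by simp
  have "(\<Sum>j<n. real N + 1 - real (dist (C j))) \<le> (\<Sum>j<n. real N + 1)"
    by (intro sum_mono) simp
  also have "\<dots> \<le> 6 * real n * real N"
    using mult_left_mono[of "real N + 1" "6 * real N" "real n"] N by (simp add: algebra_simps)
  finally have deficit: "(\<Sum>j<n. real N + 1 - real (dist (C j))) \<le> 6 * real n * real N" .
  have "2 * real n * (1 + ln (\<Sum>j<n. bullet_weight N (C j))) \<le> 6 * real n * real N"
    if bullets: "\<not> (\<forall>j<n. bullet (C j) = 0)"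
  proof -
    obtain k where k: "k < n" "0 < bullet (C k)"
      using bullets by auto
    have W: "1 \<le> (\<Sum>j<n. bullet_weight N (C j))"
      using k by (rule one_le_total_bullet_weight)
    have "(\<Sum>j<n. bullet_weight N (C j)) \<le> (\<Sum>j<n. 2 ^ N)"
      by (intro sum_mono) (simp add: bullet_weight_def)
    then have "ln (\<Sum>j<n. bullet_weight N (C j)) \<le> ln (real n * 2 ^ N)"
      using W by simp
    also have "\<dots> = ln (real n) + real N * ln 2"
      using n by (simp add: ln_mult ln_realpow)
    also have "\<dots> \<le> real n + real N"
    proof -
      have "ln (real n) \<le> real n - 1"
        using n by (intro ln_le_minus_one) simp
      moreover have "real N * ln 2 \<le> real N"
        using ln_le_minus_one[of 2] by (intro mult_left_le) simp_all
      ultimately show ?thesis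
        by simp
    qed
    finally have "ln (\<Sum>j<n. bullet_weight N (C j)) \<le> 2 * real N"
      using nN by simp
    then have "2 * real n * (1 + ln (\<Sum>j<n. bullet_weight N (C j))) \<le> 2 * real n * (1 + 2 * real N)"
      by (intro mult_left_mono) auto
    also have "\<dots> \<le> 6 * real n * real N"
      using mult_left_mono[of 1 "real N" "real n"] N by (simp add: algebra_simps)
    finally show ?thesis .
  qed
  then show ?thesis
    using deficit by (auto simp: potential_def)
qed

lemma potential_interact_le_without_bullets:
  fixes C :: config
  assumes n: "2 \<le> n" and i: "i < n" and leaderless: "\<not> has_leader n C"
    and valid: "\<forall>k<n. valid_state N (C k)" and no_bullets: "\<forall>k<n. bullet (C k) = 0"
  shows "potential N n (interact N n C i)
           \<le> potential N n C - (real (dist (C i)) + 1 - real (dist (C (Suc i mod n))))"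
proof -
  define j where "j = Suc i mod n"
  have j: "j < n" "j \<noteq> i"
    using i Suc_mod_neq[OF n] by (auto simp: j_def)
  have followers: "\<not> leader (C i)" "\<not> leader (C j)"
    using leaderless i j by (auto simp: has_leader_def)
  have potential: "potential N n C = (\<Sum>k<n. real N + 1 - real (dist (C k)))"
    using leaderless no_bullets by (simp add: potential_def)
  show ?thesis
  proof (cases "relay_dist N (C i) (C j) = N")
    case True
    then have "potential N n (interact N n C i) = 0"
      using interact_elects_leader[OF i leaderless] by (simp add: potential_def j_def)
    moreover have "(\<Sum>k\<in>{i, j}. real N + 1 - real (dist (C k))) \<le> (\<Sum>k<n. real N + 1 - real (dist (C k)))"
      by (rule sum_mono2) (use i j valid in \<open>auto simp: valid_state_def\<close>)
    moreover have "dist (C i) \<le> N"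
      using i valid by (simp add: valid_state_def)
    ultimately show ?thesis
      using j potential by (simp add: j_def)
  next
    case False
    note after = delta_without_election[OF followers False]
    have relay: "relay_dist N (C i) (C j) = Suc (dist (C i))"
      using False no_bullets j by (auto simp: relay_dist_def min_def split: if_splits)
    define C' where "C' = interact N n C i"
    have C': "C' = C(i := fst (delta N (C i) (C j)), j := snd (delta N (C i) (C j)))"
      by (simp add: C'_def interact_eq j_def)
    have "\<not> has_leader n C'" "\<forall>k<n. bullet (C' k) = 0"
      using leaderless no_bullets after i j unfolding C' has_leader_def by auto
    then have "potential N n C' = (\<Sum>k<n. real N + 1 - real (dist (C' k)))"
      by (simp add: potential_def)
    also have "\<dots> = potential N n C - (real N + 1 - real (dist (C i))) - (real N + 1 - real (dist (C j)))
        + (real N + 1 - real (dist (fst (delta N (C i) (C j)))))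
        + (real N + 1 - real (dist (snd (delta N (C i) (C j)))))"
      unfolding C' potential by (rule sum_fun_upd2) (use i j in auto)
    finally show ?thesis
      using after relay by (simp add: C'_def j_def)
  qed
qed

lemma bullet_weight_delta_le:
  assumes "\<not> leader l" "\<not> leader r" "relay_dist N l r \<noteq> N"
  shows "bullet_weight N (fst (delta N l r)) + bullet_weight N (snd (delta N l r))
           \<le> bullet_weight N r + bullet_weight N l / 2"
proof -
  note after = delta_without_election[OF assms]
  show ?thesis
  proof (cases "0 < bullet l \<and> bullet r = 0")
    case True
    then have "Suc (dist l) < N"
      using assms(3) by (auto simp: relay_dist_def min_def split: if_splits)
    then have "N - dist l = Suc (N - Suc (dist l))"
      by simp
    with True after show ?thesis
      by (simp add: bullet_weight_def relay_dist_def)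
  next
    case False
    with after show ?thesis
      by (auto simp: bullet_weight_def relay_dist_def)
  qed
qed

lemma potential_interact_le_with_bullets:
  fixes C :: config and N :: nat
  assumes n: "2 \<le> n" and i: "i < n" and leaderless: "\<not> has_leader n C"
    and bullet: "k0 < n" "0 < bullet (C k0)"
  defines "W \<equiv> \<Sum>k<n. bullet_weight N (C k)"
  shows "potential N n (interact N n C i) \<le> potential N n C - real n * bullet_weight N (C i) / W"
proof -
  define j where "j = Suc i mod n"
  have j: "j < n" "j \<noteq> i"
    using i Suc_mod_neq[OF n] by (auto simp: j_def)
  have followers: "\<not> leader (C i)" "\<not> leader (C j)"
    using leaderless i j by (auto simp: has_leader_def)
  have W: "1 \<le> W"
    unfolding W_def using bullet by (rule one_le_total_bullet_weight)
  have weight_i: "bullet_weight N (C i) \<le> W"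
    unfolding W_def by (rule member_le_sum) (use i in \<open>auto simp: bullet_weight_nonneg\<close>)
  have potential: "potential N n C = 2 * real n * (1 + ln W)"
    using leaderless bullet by (auto simp: potential_def W_def)
  show ?thesis
  proof (cases "relay_dist N (C i) (C j) = N")
    case True
    then have "potential N n (interact N n C i) = 0"
      using interact_elects_leader[OF i leaderless] by (simp add: potential_def j_def)
    moreover have "real n * bullet_weight N (C i) / W \<le> real n"
      using weight_i W by (simp add: divide_le_eq mult_left_mono)
    moreover have "real n \<le> potential N n C"
    proof -
      have "0 \<le> 2 * real n * ln W"
        using W by simp
      then show ?thesis
        using potential by (simp add: algebra_simps)
    qed
    ultimately show ?thesis
      by linarith
  next
    case False
    define C' where "C' = interact N n C i"
    have C': "C' = C(i := fst (delta N (C i) (C j)), j := snd (delta N (C i) (C j)))"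
      by (simp add: C'_def interact_eq j_def)
    have leaderless': "\<not> has_leader n C'"
      using interact_without_election[OF n i leaderless] False by (simp add: C'_def j_def)
    obtain k' where bullet': "k' < n" "0 < bullet (C' k')"
      using interact_keeps_a_bullet[OF n i leaderless _ bullet] False by (auto simp: C'_def j_def)
    define W' where "W' = (\<Sum>k<n. bullet_weight N (C' k))"
    have W': "1 \<le> W'"
      unfolding W'_def using bullet' by (rule one_le_total_bullet_weight)
    have "W' = W - bullet_weight N (C i) - bullet_weight N (C j)
        + bullet_weight N (fst (delta N (C i) (C j))) + bullet_weight N (snd (delta N (C i) (C j)))"
      unfolding W'_def W_def C' by (rule sum_fun_upd2) (use i j in auto)
    then have "W' \<le> W - bullet_weight N (C i) / 2"
      using bullet_weight_delta_le[OF followers False] by simp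
    then have "ln W' \<le> ln W - bullet_weight N (C i) / 2 / W"
      using W W' by (intro ln_le_ln_minus_div) auto
    moreover have "potential N n C' = 2 * real n * (1 + ln W')"
      using leaderless' bullet' by (auto simp: potential_def W'_def)
    ultimately have "potential N n C' \<le> 2 * real n * (1 + (ln W - bullet_weight N (C i) / 2 / W))"
      by (simp add: mult_left_mono)
    also have "\<dots> = potential N n C - real n * bullet_weight N (C i) / W"
      using W potential by (simp add: field_simps)
    finally show ?thesis
      unfolding C'_def .
  qed
qed

lemma potential_drift:
  fixes C :: config
  assumes n: "2 \<le> n" and valid: "\<forall>k<n. valid_state N (C k)" and leaderless: "\<not> has_leader n C"
  shows "1 + (\<Sum>i<n. potential N n (interact N n C i)) / real n \<le> potential N n C"
proof -
  have "(\<Sum>i<n. potential N n (interact N n C i)) \<le> real n * potential N n C - real n"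
  proof (cases "\<forall>k<n. bullet (C k) = 0")
    case True
    have "(\<Sum>i<n. potential N n (interact N n C i))
       \<le> (\<Sum>i<n. potential N n C - (real (dist (C i)) + 1 - real (dist (C (Suc i mod n)))))"
      using potential_interact_le_without_bullets[OF n _ leaderless valid True] by (intro sum_mono) auto
    also have "\<dots> = real n * potential N n C - real n
        - (\<Sum>i<n. real (dist (C i))) + (\<Sum>i<n. real (dist (C (Suc i mod n))))"
      by (simp add: sum_subtractf sum.distrib)
    also have "(\<Sum>i<n. real (dist (C (Suc i mod n)))) = (\<Sum>i<n. real (dist (C i)))"
      using n by (intro sum_Suc_mod) simp
    finally show ?thesis
      by simp
  next
    case False
    then obtain k0 where bullet: "k0 < n" "0 < bullet (C k0)"
      by auto
    define W where "W = (\<Sum>k<n. bullet_weight N (C k))"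
    have W: "1 \<le> W"
      unfolding W_def using bullet by (rule one_le_total_bullet_weight)
    have "(\<Sum>i<n. potential N n (interact N n C i))
        \<le> (\<Sum>i<n. potential N n C - real n * bullet_weight N (C i) / W)"
      using potential_interact_le_with_bullets[OF n _ leaderless bullet] by (intro sum_mono) (simp add: W_def)
    also have "\<dots> = real n * potential N n C - real n * W / W"
      by (simp add: W_def sum_subtractf sum_divide_distrib[symmetric] sum_distrib_left[symmetric])
    also have "\<dots> = real n * potential N n C - real n"
      using W by simp
    finally show ?thesis .
  qed
  then show ?thesis
    using n by (simp add: field_simps)
qed

lemma potential_expected_drift:
  fixes C :: config
  assumes n: "2 \<le> n" and valid: "\<forall>k<n. valid_state N (C k)" and leaderless: "\<not> has_leader n C"
  shows "1 + (\<integral>\<^sup>+i. ennreal (potential N n (interact N n C i)) \<partial>pmf_of_set {..<n})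
           \<le> ennreal (potential N n C)"
proof -
  have nonneg: "0 \<le> potential N n (interact N n C i)" if "i < n" for i
    using that valid by (simp add: potential_nonneg valid_state_interact)
  have mean_nonneg: "0 \<le> (\<Sum>i<n. potential N n (interact N n C i)) / real n"
    by (intro divide_nonneg_nonneg sum_nonneg) (auto intro: nonneg)
  have "(\<integral>\<^sup>+i. ennreal (potential N n (interact N n C i)) \<partial>pmf_of_set {..<n})
      = (\<Sum>i<n. ennreal (potential N n (interact N n C i))) / ennreal (real n)"
    using n by (subst nn_integral_pmf_of_set) (auto simp: ennreal_of_nat_eq_real_of_nat lessThan_empty_iff)
  also have "\<dots> = ennreal (\<Sum>i<n. potential N n (interact N n C i)) / ennreal (real n)"
    by (subst sum_ennreal) (auto intro: nonneg)
  also have "\<dots> = ennreal ((\<Sum>i<n. potential N n (interact N n C i)) / real n)"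
    using n nonneg by (intro divide_ennreal sum_nonneg) auto
  finally have "1 + (\<integral>\<^sup>+i. ennreal (potential N n (interact N n C i)) \<partial>pmf_of_set {..<n})
      = ennreal (1 + (\<Sum>i<n. potential N n (interact N n C i)) / real n)"
    using ennreal_plus[OF zero_le_one mean_nonneg] by simp
  also have "\<dots> \<le> ennreal (potential N n C)"
    using potential_drift[OF n valid leaderless] by (rule ennreal_leI)
  finally show ?thesis .
qed

theorem lemma10:
  shows "\<exists>c::real. c > 0 \<and>
    (\<forall>N n (C::config).
       2 \<le> n \<longrightarrow> n \<le> N \<longrightarrow>
       (\<forall>i<n. valid_state N (C i)) \<longrightarrow>
       \<not> has_leader n C \<longrightarrow>
       expected_hit_time N n C \<le> ennreal (c * real n * real N))"
proof (intro exI[of _ 6] conjI allI impI)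
  fix N n and C :: config
  assume n: "2 \<le> n" and nN: "n \<le> N" and valid: "\<forall>i<n. valid_state N (C i)"
    and leaderless: "\<not> has_leader n C"
  have "expected_hit_time N n C = (\<integral>\<^sup>+\<omega>. ennreal_of_enat (hitting_time (interact N n) (has_leader n) C \<omega>)
                                     \<partial>stream_space (measure_pmf (pmf_of_set {..<n})))"
    by (simp add: expected_hit_time_def scheduler_def hit_time_eq_hitting_time)
  also have "\<dots> \<le> ennreal (potential N n C)"
  proof (rule nn_integral_hitting_time_le_potential[where I = "\<lambda>C. \<forall>i<n. valid_state N (C i)"])
    have "set_pmf (pmf_of_set {..<n}) = {..<n}"
      using n by (simp add: lessThan_empty_iff)
    then show "\<forall>k<n. valid_state N (interact N n C' i k)"
      if "\<forall>k<n. valid_state N (C' k)" "i \<in> set_pmf (pmf_of_set {..<n})" for C' i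
      using that by (simp add: valid_state_interact)
  qed (use n valid potential_expected_drift in auto)
  also have "\<dots> \<le> ennreal (6 * real n * real N)"
    using potential_le[OF n nN] by (rule ennreal_leI)
  finally show "expected_hit_time N n C \<le> ennreal (6 * real n * real N)" .
qed simp

end
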